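(* Let $\mathbf A$ be a Mal'cev algebra, let $n\ge 1$, and let $\alpha_0,\dots,\alpha_{n-1}$ be congruences of $\mathbf A$. Then \[ [\alpha_0,\dots,\alpha_{n-1}] = \psi_{2^n-1}\big(\Delta(\alpha_0,\dots,\alpha_{n-1})\big). \]
   Context: A Mal'cev algebra is an algebra having a ternary term operation $q$ with $q(x,x,y)=y=q(y,x,x)$ for all $x,y$. Higher commutator (Bulatov): for congruences $\alpha_0,\dots,\alpha_{n-1},\gamma$ of $\mathbf A$, say $\alpha_0,\dots,\alpha_{n-2}$ centralize $\alpha_{n-1}$ modulo $\gamma$ if for all tuples $\mathbf a_i,\mathbf b_i$ ($i<n$, of arbitrary lengths, with $\mathbf a_i\neq\mathbf b_i$ and $\mathbf a_i,\mathbf b_i$ congruent modulo $\alpha_i$ coordinatewise) and every term operation $t$ of $\mathbf A$ such that $t(\mathbf x_0,\dots,\mathbf x_{n-2},\mathbf a_{n-1})\equiv_\gamma t(\mathbf x_0,\dots,\mathbf x_{n-2},\mathbf b_{n-1})$ for all $(\mathbf x_0,\dots,\mathbf x_{n-2})\in(\{\mathbf a_0,\mathbf b_0\}\times\dots\times\{\mathbf a_{n-2},\mathbf b_{n-2}\})\setminus\{(\mathbf b_0,\dots,\mathbf b_{n-2})\}$, we have $t(\mathbf b_0,\dots,\mathbf b_{n-2},\mathbf a_{n-1})\equiv_\gamma t(\mathbf b_0,\dots,\mathbf b_{n-2},\mathbf b_{n-1})$. The commutator $[\alpha_0,\dots,\alpha_{n-1}]$ is the smallest congruence $\gamma$ such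 that $\alpha_0,\dots,\alpha_{n-2}$ centralize $\alpha_{n-1}$ modulo $\gamma$. Tuples in $A^m$ are indexed by $0,\dots,m-1$. For an integer $k\ge 0$ and $i\ge0$, $k_{(i)}\in\{0,1\}$ denotes the $i$-th binary digit of $k$ (counting from the least significant digit, starting at $0$), so $k=\sum_i 2^ik_{(i)}$. For $a,b\in A$ and $i<n$, $\mathbf c_i^n(a,b)\in A^{2^n}$ is the tuple whose $k$-th coordinate ($k<2^n$) is $a$ if $k_{(i)}=0$ and $b$ if $k_{(i)}=1$. For congruences $\alpha_0,\dots,\alpha_{n-1}$, $\Delta(\alpha_0,\dots,\alpha_{n-1})=\Delta_{\mathbf A}(\alpha_0,\dots,\alpha_{n-1})$ is the subuniverse of $\mathbf A^{2^n}$ generated by $\{\mathbf c_i^n(a,b): i<n,\ (a,b)\in\alpha_i\}$; for $n=0$, $\Delta()=A$. Forks: for $R\subseteq A^m$ and $i<m$, $\psi_i(R)$ is the set of pairs $(a,b)$ for which there exist $\mathbf c,\mathbf d\in R$ with $c_i=a$, $d_i=b$ and $c_j=d_j$ for all $j\neq i$. *)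

theory Defs
  imports Main
begin

text \<open>An algebra is given by a carrier set A and a set F of fundamental operations;
  an operation is a pair (k, f) of an arity k and a function f acting on argument lists
  of length k.\<close>

type_synonym 'a operation = "nat \<times> ('a list \<Rightarrow> 'a)"

definition algebra :: "'a set \<Rightarrow> 'a operation set \<Rightarrow> bool" where
  "algebra A F \<longleftrightarrow>
     (\<forall>(k, f) \<in> F. \<forall>xs. length xs = k \<and> set xs \<subseteq> A \<longrightarrow> f xs \<in> A)"

text \<open>Term operations (the clone generated by the fundamental operations):
  (m, t) means t is an m-ary term operation.\<close>

inductive_set term_ops :: "'a operation set \<Rightarrow> 'a operation set" for F where
  proj: "i < m \<Longrightarrow> (m, \<lambda>xs. xs ! i) \<in> term_ops F"
| comp: "(k, f) \<in> F \<Longrightarrow> (\<forall>j<k. (m, g j) \<in> term_ops F) \<Longrightarrow>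
         (m, \<lambda>xs. f (map (\<lambda>j. g j xs) [0..<k])) \<in> term_ops F"

definition malcev :: "'a set \<Rightarrow> 'a operation set \<Rightarrow> bool" where
  "malcev A F \<longleftrightarrow> (\<exists>q. (3, q) \<in> term_ops F \<and>
      (\<forall>x\<in>A. \<forall>y\<in>A. q [x, x, y] = y \<and> q [y, x, x] = y))"

definition congruence :: "'a set \<Rightarrow> 'a operation set \<Rightarrow> ('a \<times> 'a) set \<Rightarrow> bool" where
  "congruence A F \<theta> \<longleftrightarrow> \<theta> \<subseteq> A \<times> A \<and> equiv A \<theta> \<and>
     (\<forall>(k, f) \<in> F. \<forall>xs ys. length xs = k \<and> length ys = k \<and>
        list_all2 (\<lambda>x y. (x, y) \<in> \<theta>) xs ys \<longrightarrow> (f xs, f ys) \<in> \<theta>)"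

definition cargs :: "nat \<Rightarrow> nat set \<Rightarrow> (nat \<Rightarrow> 'a list) \<Rightarrow> (nat \<Rightarrow> 'a list) \<Rightarrow> 'a list \<Rightarrow> 'a list" where
  "cargs n S a b c = concat (map (\<lambda>i. if i \<in> S then b i else a i) [0..<n - 1]) @ c"

text \<open>alpha 0, ..., alpha (n-2) centralize alpha (n-1) modulo gamma (Bulatov).\<close>

definition centralizes ::
  "'a set \<Rightarrow> 'a operation set \<Rightarrow> nat \<Rightarrow> (nat \<Rightarrow> ('a \<times> 'a) set) \<Rightarrow> ('a \<times> 'a) set \<Rightarrow> bool" where
  "centralizes A F n \<alpha> \<gamma> \<longleftrightarrow>
     (\<forall>a b :: nat \<Rightarrow> 'a list. \<forall>t.
        (\<forall>i<n. length (a i) = length (b i) \<and> a i \<noteq> b i \<and>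
               list_all2 (\<lambda>x y. (x, y) \<in> \<alpha> i) (a i) (b i)) \<longrightarrow>
        ((\<Sum>i<n. length (a i)), t) \<in> term_ops F \<longrightarrow>
        (\<forall>S. S \<subseteq> {..<n - 1} \<and> S \<noteq> {..<n - 1} \<longrightarrow>
             (t (cargs n S a b (a (n - 1))), t (cargs n S a b (b (n - 1)))) \<in> \<gamma>) \<longrightarrow>
        (t (cargs n {..<n - 1} a b (a (n - 1))), t (cargs n {..<n - 1} a b (b (n - 1)))) \<in> \<gamma>)"

definition commutator ::
  "'a set \<Rightarrow> 'a operation set \<Rightarrow> nat \<Rightarrow> (nat \<Rightarrow> ('a \<times> 'a) set) \<Rightarrow> ('a \<times> 'a) set" where
  "commutator A F n \<alpha> = \<Inter>{\<gamma>. congruence A F \<gamma> \<and> centralizes A F n \<alpha> \<gamma>}"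

definition apply_cw :: "('a list \<Rightarrow> 'a) \<Rightarrow> nat \<Rightarrow> 'a list list \<Rightarrow> 'a list" where
  "apply_cw f m vs = map (\<lambda>j. f (map (\<lambda>v. v ! j) vs)) [0..<m]"

inductive_set gen_sub :: "'a operation set \<Rightarrow> nat \<Rightarrow> 'a list set \<Rightarrow> 'a list set"
  for F m G where
  gen: "v \<in> G \<Longrightarrow> v \<in> gen_sub F m G"
| op: "(k, f) \<in> F \<Longrightarrow> length vs = k \<Longrightarrow> (\<forall>v \<in> set vs. v \<in> gen_sub F m G) \<Longrightarrow>
       apply_cw f m vs \<in> gen_sub F m G"

definition ctuple :: "nat \<Rightarrow> nat \<Rightarrow> 'a \<Rightarrow> 'a \<Rightarrow> 'a list" where
  "ctuple n i a b = map (\<lambda>k. if bit k i then b else a) [0..<2 ^ n]"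

definition Delta ::
  "'a set \<Rightarrow> 'a operation set \<Rightarrow> nat \<Rightarrow> (nat \<Rightarrow> ('a \<times> 'a) set) \<Rightarrow> 'a list set" where
  "Delta A F n \<alpha> =
     (if n = 0 then {[x] | x. x \<in> A}
      else gen_sub F (2 ^ n) {ctuple n i a b | i a b. i < n \<and> (a, b) \<in> \<alpha> i})"

definition fork :: "nat \<Rightarrow> 'a list set \<Rightarrow> ('a \<times> 'a) set" where
  "fork i R = {(c ! i, d ! i) | c d. c \<in> R \<and> d \<in> R \<and> length c = length d \<and> i < length c \<and>
                 (\<forall>j < length c. j \<noteq> i \<longrightarrow> c ! j = d ! j)}"

end

theory Submission
  imports Defs
begin

text \<open>Write N = 2^n - 1 for the top vertex of the cube of coordinates and \<Delta> for
  \<Delta>(\<alpha>_0, ..., \<alpha>_{n-1}). Flipping bits of the coordinates maps \<Delta> onto itself (it only swaps the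
  two entries of generators), so all forks of \<Delta> coincide with \<psi>_N(\<Delta>); with the Mal'cev term,
  \<Delta> is closed under replacing one coordinate by a fork-related element. Hence \<psi>_N(\<Delta>) is a
  congruence, and it centralizes: the values of a term on the cube spanned by tuples a_i, b_i
  form an element of \<Delta>, and the premises of the centrality condition make its coordinates
  below the top fork-related to those of the cube with b_{n-1} replaced by a_{n-1}.

  Conversely, two elements of \<Delta> that agree off the top are values u, w of terms on the
  columns of a single list of generators. Grouping the generators by congruence into tuples
  a_i, b_i and doubling the last block, the term q(u, w, w') meets every premise of the
  centrality condition trivially by the Mal'cev identities, while its conclusion is the pair
  of top coordinates; so every centralizing congruence contains \<psi>_N(\<Delta>).\<close>

section \<open>Term operations and generated subuniverses\<close>

lemma term_ops_subst:
  assumes "(m, t) \<in> term_ops F" "\<forall>j<m. (m', g j) \<in> term_ops F"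
  shows "(m', \<lambda>xs. t (map (\<lambda>j. g j xs) [0..<m])) \<in> term_ops F"
  using assms
proof (induction rule: term_ops.induct)
  case (proj i m)
  then show ?case by simp
next
  case (comp k f m h)
  have "(m', \<lambda>xs. f (map (\<lambda>j. (\<lambda>j xs. h j (map (\<lambda>l. g l xs) [0..<m])) j xs) [0..<k])) \<in> term_ops F"
    by (rule term_ops.comp[OF comp(1)]) (use comp in blast)
  then show ?case by simp
qed

lemma term_ops_reindex:
  assumes "(m, t) \<in> term_ops F" "\<forall>j<m. \<sigma> j < m'"
  shows "(m', \<lambda>xs. t (map (\<lambda>j. xs ! \<sigma> j) [0..<m])) \<in> term_ops F"
  using term_ops_subst[OF assms(1), of m' "\<lambda>j xs. xs ! \<sigma> j"] assms(2) term_ops.proj by blast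

lemma term_ops_closed:
  assumes "algebra A F" "(m, t) \<in> term_ops F" "length xs = m" "set xs \<subseteq> A"
  shows "t xs \<in> A"
  using assms(2-4)
proof (induction arbitrary: xs rule: term_ops.induct)
  case (proj i m)
  then show ?case by auto
next
  case (comp k f m g)
  have "set (map (\<lambda>j. g j xs) [0..<k]) \<subseteq> A" using comp by auto
  then show ?case using assms(1) comp(1) unfolding algebra_def by auto
qed

lemma length_concat_map_upt: "length (concat (map f [0..<k])) = (\<Sum>l<k. length (f l))"
  by (induction k) auto

lemma sum_lessThan_add_le: "(j::nat) < k \<Longrightarrow> (\<Sum>l<j. g l) + g j \<le> (\<Sum>l<k. g l :: nat)"
proof -
  assume "j < k"
  then have "{..<Suc j} \<subseteq> {..<k}" by auto
  then show ?thesis by (simp flip: sum.lessThan_Suc add: sum_mono2)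
qed

lemma nth_concat_map_upt:
  "j < k \<Longrightarrow> i < length (f j) \<Longrightarrow>
   concat (map f [0..<k]) ! ((\<Sum>l<j. length (f l)) + i) = f j ! i"
proof (induction k)
  case 0
  then show ?case by simp
next
  case (Suc k)
  show ?case
  proof (cases "j < k")
    case True
    have "(\<Sum>l<j. length (f l)) + i < (\<Sum>l<k. length (f l))"
      using sum_lessThan_add_le[OF True, of "\<lambda>l. length (f l)"] Suc.prems by linarith
    then show ?thesis using Suc True by (simp add: nth_append length_concat_map_upt)
  next
    case False
    then have "j = k" using Suc.prems by simp
    then show ?thesis by (simp add: nth_append length_concat_map_upt)
  qed
qed

lemma gen_sub_length:
  assumes "v \<in> gen_sub F m G" "\<forall>g\<in>G. length g = m"
  shows "length v = m"
  using assms by (induction rule: gen_sub.induct) (auto simp: apply_cw_def)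

lemma gen_sub_subset:
  assumes "algebra A F" "v \<in> gen_sub F m G" "\<forall>g\<in>G. length g = m \<and> set g \<subseteq> A"
  shows "set v \<subseteq> A"
  using assms(2,3)
proof (induction rule: gen_sub.induct)
  case (gen v)
  then show ?case by auto
next
  case (op k f vs)
  have L: "\<forall>v\<in>set vs. length v = m" using op gen_sub_length by blast
  show ?case
  proof
    fix x assume "x \<in> set (apply_cw f m vs)"
    then obtain j where j: "j < m" "x = f (map (\<lambda>v. v ! j) vs)" by (auto simp: apply_cw_def)
    have "set (map (\<lambda>v. v ! j) vs) \<subseteq> A" using op L j by (auto simp: subset_iff)
    then show "x \<in> A" using assms(1) op(1,2) j unfolding algebra_def by auto
  qed
qed

lemma gen_sub_term_closed:
  assumes "(L, t) \<in> term_ops F" "length gs = L" "set gs \<subseteq> gen_sub F m G" "\<forall>g\<in>G. length g = m"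
  shows "apply_cw t m gs \<in> gen_sub F m G"
  using assms(1-3)
proof (induction arbitrary: gs rule: term_ops.induct)
  case (proj i L)
  have "gs ! i \<in> gen_sub F m G" using proj by auto
  moreover have "apply_cw (\<lambda>xs. xs ! i) m gs = gs ! i"
    using proj gen_sub_length[OF calculation assms(4)]
    by (auto simp: apply_cw_def intro: nth_equalityI)
  ultimately show ?case by simp
next
  case (comp k f L h)
  have "apply_cw (\<lambda>xs. f (map (\<lambda>j. h j xs) [0..<k])) m gs
        = apply_cw f m (map (\<lambda>j. apply_cw (h j) m gs) [0..<k])"
    by (auto simp: apply_cw_def comp_def intro!: nth_equalityI)
  moreover have "apply_cw f m (map (\<lambda>j. apply_cw (h j) m gs) [0..<k]) \<in> gen_sub F m G"
    by (rule gen_sub.op[OF comp(1)]) (use comp in auto)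
  ultimately show ?case by simp
qed

lemma map_nth_concat_map_upt:
  assumes "j < k"
  shows "map (\<lambda>i. concat (map f [0..<k]) ! ((\<Sum>l<j. length (f l)) + i)) [0..<length (f j)] = f j"
  by (rule nth_equalityI) (simp_all add: nth_concat_map_upt[OF assms])

lemma gen_sub_term_image:
  assumes "v \<in> gen_sub F m G" "\<forall>g\<in>G. length g = m"
  shows "\<exists>gs t. set gs \<subseteq> G \<and> (length gs, t) \<in> term_ops F \<and> v = apply_cw t m gs"
  using assms(1)
proof (induction rule: gen_sub.induct)
  case (gen v)
  have "apply_cw (\<lambda>xs. xs ! 0) m [v] = v"
    using gen assms(2) by (auto simp: apply_cw_def intro: nth_equalityI)
  moreover have "(length [v], \<lambda>xs. xs ! 0) \<in> term_ops F" using term_ops.proj[of 0 1] by simp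
  ultimately show ?case
    using gen by (intro exI[of _ "[v]"] exI[of _ "\<lambda>xs. xs ! 0"]) auto
next
  case (op k f vs)
  then have "\<forall>j<k. \<exists>gs t. set gs \<subseteq> G \<and> (length gs, t) \<in> term_ops F \<and> vs ! j = apply_cw t m gs"
    by auto
  then obtain GS T where GT: "\<forall>j<k. set (GS j) \<subseteq> G \<and> (length (GS j), T j) \<in> term_ops F
      \<and> vs ! j = apply_cw (T j) m (GS j)"
    by metis
  define off where "off j = (\<Sum>l<j. length (GS l))" for j
  define T' where "T' j = (\<lambda>xs. T j (map (\<lambda>i. xs ! (off j + i)) [0..<length (GS j)]))" for j
  define gs where "gs = concat (map GS [0..<k])"
  have T'_term: "(off k, T' j) \<in> term_ops F" if "j < k" for j
    unfolding T'_def
    using term_ops_reindex GT that sum_lessThan_add_le[OF that, of "\<lambda>l. length (GS l)"]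
    unfolding off_def by fastforce
  have "(length gs, \<lambda>xs. f (map (\<lambda>j. T' j xs) [0..<k])) \<in> term_ops F"
    unfolding gs_def length_concat_map_upt off_def[symmetric]
    by (rule term_ops.comp) (use op T'_term in auto)
  moreover have "set gs \<subseteq> G" unfolding gs_def using GT by auto
  moreover have "apply_cw f m vs = apply_cw (\<lambda>xs. f (map (\<lambda>j. T' j xs) [0..<k])) m gs"
  proof -
    have "map (\<lambda>v. v ! p) vs = map (\<lambda>j. T' j (map (\<lambda>g. g ! p) gs)) [0..<k]" if "p < m" for p
    proof (rule nth_equalityI)
      fix j assume "j < length (map (\<lambda>v. v ! p) vs)"
      then have j: "j < k" using op by simp
      have "T' j (map (\<lambda>g. g ! p) gs) = T j (map (\<lambda>g. g ! p) (GS j))"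
        using map_nth_concat_map_upt[OF j, of "\<lambda>l. map (\<lambda>g. g ! p) (GS l)"]
        by (simp add: T'_def off_def gs_def map_concat comp_def)
      then show "map (\<lambda>v. v ! p) vs ! j = map (\<lambda>j. T' j (map (\<lambda>g. g ! p) gs)) [0..<k] ! j"
        using GT j op \<open>p < m\<close> by (simp add: apply_cw_def)
    qed (use op in simp)
    then show ?thesis by (simp add: apply_cw_def)
  qed
  ultimately show ?case by blast
qed

section \<open>Vertices of the cube as binary digits\<close>

definition nat_of_bits :: "nat \<Rightarrow> (nat \<Rightarrow> bool) \<Rightarrow> nat" where
  "nat_of_bits n \<sigma> = horner_sum of_bool 2 (map \<sigma> [0..<n])"

lemma bit_nat_of_bits: "bit (nat_of_bits n \<sigma>) i \<longleftrightarrow> i < n \<and> \<sigma> i"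
  unfolding nat_of_bits_def by (auto simp: bit_horner_sum_bit_iff)

lemma nat_of_bits_less: "nat_of_bits n \<sigma> < 2 ^ n"
proof -
  have "take_bit n (nat_of_bits n \<sigma>) = nat_of_bits n \<sigma>"
    by (rule bit_eqI) (auto simp: bit_take_bit_iff bit_nat_of_bits)
  then show ?thesis by (simp add: take_bit_nat_eq_self_iff)
qed

lemma bit_imp_less_of_less_power: "(k::nat) < 2 ^ n \<Longrightarrow> bit k i \<Longrightarrow> i < n"
  by (metis bit_take_bit_iff take_bit_nat_eq_self_iff)

lemma nat_eq_by_low_bits:
  "(k::nat) < 2 ^ n \<Longrightarrow> l < 2 ^ n \<Longrightarrow> (\<forall>i<n. bit k i \<longleftrightarrow> bit l i) \<Longrightarrow> k = l"
  by (metis bit_eqI bit_imp_less_of_less_power)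

lemma bit_power_minus_1: "bit ((2::nat) ^ n - 1) i \<longleftrightarrow> i < n"
  using bit_mask_iff[of n i, where 'a=nat] by (simp add: mask_eq_exp_minus_1)

lemma xor_less_power: "(k::nat) < 2 ^ n \<Longrightarrow> l < 2 ^ n \<Longrightarrow> xor k l < 2 ^ n"
  by (metis take_bit_nat_eq_self_iff take_bit_xor)

lemma xor_xor_eq_imp_eq: "xor (l::nat) (xor j m) = m \<Longrightarrow> l = j"
  by (rule bit_eqI) (metis bit_xor_iff)

lemma xor_xor_self: "xor (j::nat) (xor j m) = m"
  by (rule bit_eqI) (auto simp: bit_xor_iff)

section \<open>Forks\<close>

lemma forkI:
  assumes "c \<in> R" "d \<in> R" "length c = m" "length d = m" "j < m"
    and "\<forall>l<m. l \<noteq> j \<longrightarrow> c ! l = d ! l"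
  shows "(c ! j, d ! j) \<in> fork j R"
  unfolding fork_def using assms by (intro CollectI exI[of _ c] exI[of _ d]) auto

lemma forkE:
  assumes "(x, y) \<in> fork j R" "\<forall>v\<in>R. length v = m"
  obtains c d where "c \<in> R" "d \<in> R" "j < m" "\<forall>l<m. l \<noteq> j \<longrightarrow> c ! l = d ! l"
    "c ! j = x" "d ! j = y"
proof -
  obtain c d where "c \<in> R" "d \<in> R" "length c = length d" "j < length c"
    "\<forall>l<length c. l \<noteq> j \<longrightarrow> c ! l = d ! l" "x = c ! j" "y = d ! j"
    using assms(1) unfolding fork_def by blast
  with assms(2) that show ?thesis by metis
qed

lemma fork_sym:
  assumes "(x, y) \<in> fork j R"
  shows "(y, x) \<in> fork j R"
proof -
  obtain c d where "c \<in> R" "d \<in> R" "length c = length d" "j < length c"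
    "\<forall>l<length c. l \<noteq> j \<longrightarrow> c ! l = d ! l" "x = c ! j" "y = d ! j"
    using assms unfolding fork_def by blast
  then show ?thesis unfolding fork_def by (intro CollectI exI[of _ d] exI[of _ c]) auto
qed

lemma fork_compatible:
  assumes R_length: "\<forall>v\<in>R. length v = m"
    and closed: "\<And>vs. length vs = k \<Longrightarrow> set vs \<subseteq> R \<Longrightarrow> apply_cw f m vs \<in> R"
    and "length xs = k" "length ys = k" "list_all2 (\<lambda>x y. (x, y) \<in> fork j R) xs ys"
    and "j < m"
  shows "(f xs, f ys) \<in> fork j R"
proof -
  have "\<exists>c d. c \<in> R \<and> d \<in> R \<and> (\<forall>l<m. l \<noteq> j \<longrightarrow> c ! l = d ! l)
      \<and> c ! j = xs ! i \<and> d ! j = ys ! i" if "i < k" for i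
  proof -
    have "(xs ! i, ys ! i) \<in> fork j R" using assms(3,5) that by (simp add: list_all2_conv_all_nth)
    from forkE[OF this R_length] show ?thesis by metis
  qed
  then obtain C D where CD: "\<forall>i<k. C i \<in> R \<and> D i \<in> R
      \<and> (\<forall>l<m. l \<noteq> j \<longrightarrow> C i ! l = D i ! l) \<and> C i ! j = xs ! i \<and> D i ! j = ys ! i"
    by metis
  define c where "c = apply_cw f m (map C [0..<k])"
  define d where "d = apply_cw f m (map D [0..<k])"
  have "c \<in> R" "d \<in> R" unfolding c_def d_def by (rule closed; use CD in auto)+
  moreover have "\<forall>l<m. l \<noteq> j \<longrightarrow> c ! l = d ! l"
    using CD by (auto simp: c_def d_def apply_cw_def intro!: arg_cong[where f = f] map_cong)
  ultimately have "(c ! j, d ! j) \<in> fork j R"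
    using forkI[of c R d m j] \<open>j < m\<close> by (simp add: c_def d_def apply_cw_def)
  moreover have "map (\<lambda>i. C i ! j) [0..<k] = xs" "map (\<lambda>i. D i ! j) [0..<k] = ys"
    using CD assms(3,4) by (auto intro: nth_equalityI)
  ultimately show ?thesis using \<open>j < m\<close> by (simp add: c_def d_def apply_cw_def comp_def)
qed

lemma fork_update:
  assumes R_lists: "\<forall>v\<in>R. length v = m \<and> set v \<subseteq> A"
    and q_closed: "\<And>x y z. x \<in> R \<Longrightarrow> y \<in> R \<Longrightarrow> z \<in> R \<Longrightarrow> apply_cw q m [x, y, z] \<in> R"
    and q_malcev: "\<forall>x\<in>A. \<forall>y\<in>A. q [x, x, y] = y \<and> q [y, x, x] = y"
    and "x \<in> R" "(x ! j, y) \<in> fork j R"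
  shows "x[j := y] \<in> R"
proof -
  obtain c d where cd: "c \<in> R" "d \<in> R" "j < m" "\<forall>l<m. l \<noteq> j \<longrightarrow> c ! l = d ! l"
    "c ! j = x ! j" "d ! j = y"
    using forkE[OF assms(5)] R_lists by metis
  have "apply_cw q m [x, c, d] = x[j := y]"
  \<comment> \<open>coordinate j: q(x_j, x_j, y) = y; elsewhere q(x_l, c_l, c_l) = x_l\<close>
    using R_lists q_malcev cd \<open>x \<in> R\<close>
    by (auto simp: apply_cw_def nth_list_update subset_iff intro!: nth_equalityI)
  then show ?thesis using q_closed[OF \<open>x \<in> R\<close> cd(1,2)] by simp
qed

lemma fork_trans:
  assumes R_lists: "\<forall>v\<in>R. length v = m \<and> set v \<subseteq> A"
    and q_closed: "\<And>x y z. x \<in> R \<Longrightarrow> y \<in> R \<Longrightarrow> z \<in> R \<Longrightarrow> apply_cw q m [x, y, z] \<in> R"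
    and q_malcev: "\<forall>x\<in>A. \<forall>y\<in>A. q [x, x, y] = y \<and> q [y, x, x] = y"
    and "(x, y) \<in> fork j R" "(y, z) \<in> fork j R"
  shows "(x, z) \<in> fork j R"
proof -
  obtain c d where cd: "c \<in> R" "d \<in> R" "j < m" "\<forall>l<m. l \<noteq> j \<longrightarrow> c ! l = d ! l"
    "c ! j = y" "d ! j = z"
    using forkE[OF assms(5)] R_lists by metis
  have "c[j := x] \<in> R"
    using fork_update[OF R_lists q_closed q_malcev cd(1)] fork_sym[OF assms(4)] cd(5) by blast
  then have "(c[j := x] ! j, d ! j) \<in> fork j R"
    using forkI[of "c[j := x]" R d m j] cd R_lists by simp
  then show ?thesis using cd R_lists by simp
qed

section \<open>The fork at the top vertex of \<Delta> is a congruence\<close>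

lemma congruence_equiv: "congruence A F \<theta> \<Longrightarrow> equiv A \<theta>"
  by (simp add: congruence_def)

lemma congruence_refl: "congruence A F \<theta> \<Longrightarrow> x \<in> A \<Longrightarrow> (x, x) \<in> \<theta>"
  by (drule congruence_equiv) (auto simp: equiv_def elim: refl_onD)

lemma congruence_sym: "congruence A F \<theta> \<Longrightarrow> (x, y) \<in> \<theta> \<Longrightarrow> (y, x) \<in> \<theta>"
  by (drule congruence_equiv) (auto simp: equiv_def elim: symE)

lemma ctuple_nth: "k < 2 ^ n \<Longrightarrow> ctuple n i a b ! k = (if bit k i then b else a)"
  by (simp add: ctuple_def)

locale malcev_congruences =
  fixes A :: "'a set" and F :: "'a operation set" and q :: "'a list \<Rightarrow> 'a"
    and n :: nat and \<alpha> :: "nat \<Rightarrow> ('a \<times> 'a) set"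
  assumes algebra: "algebra A F"
    and q_term: "(3, q) \<in> term_ops F"
    and q_malcev: "\<forall>x\<in>A. \<forall>y\<in>A. q [x, x, y] = y \<and> q [y, x, x] = y"
    and n_pos: "1 \<le> n"
    and congruences: "\<forall>i<n. congruence A F (\<alpha> i)"
begin

abbreviation N :: nat where "N \<equiv> 2 ^ n - 1"

lemma bit_N: "bit N i \<longleftrightarrow> i < n"
  by (rule bit_power_minus_1)

abbreviation \<Delta> :: "'a list set" where "\<Delta> \<equiv> Delta A F n \<alpha>"

definition generators :: "'a list set" where
  "generators = {ctuple n i a b | i a b. i < n \<and> (a, b) \<in> \<alpha> i}"

lemma Delta_eq: "\<Delta> = gen_sub F (2 ^ n) generators"
  using n_pos by (simp add: Delta_def generators_def)

lemma alpha_in_carrier: "i < n \<Longrightarrow> (x, y) \<in> \<alpha> i \<Longrightarrow> x \<in> A \<and> y \<in> A"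
  using congruences unfolding congruence_def by auto

lemma alpha_refl: "i < n \<Longrightarrow> x \<in> A \<Longrightarrow> (x, x) \<in> \<alpha> i"
  by (rule congruence_refl[OF congruences[rule_format]])

lemma alpha_sym: "i < n \<Longrightarrow> (x, y) \<in> \<alpha> i \<Longrightarrow> (y, x) \<in> \<alpha> i"
  by (rule congruence_sym[OF congruences[rule_format]])

lemma generators_lists: "\<forall>g\<in>generators. length g = 2 ^ n \<and> set g \<subseteq> A"
  unfolding generators_def ctuple_def using alpha_in_carrier by fastforce

lemma Delta_lists: "\<forall>v\<in>\<Delta>. length v = 2 ^ n \<and> set v \<subseteq> A"
  unfolding Delta_eq using gen_sub_length gen_sub_subset[OF algebra] generators_lists by blast

lemma Delta_length: "\<forall>v\<in>\<Delta>. length v = 2 ^ n"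
  using Delta_lists by blast

lemma Delta_nth_in_carrier: "v \<in> \<Delta> \<Longrightarrow> k < 2 ^ n \<Longrightarrow> v ! k \<in> A"
  using Delta_lists by (metis nth_mem subsetD)

lemma Delta_op_closed: "(k, f) \<in> F \<Longrightarrow> length vs = k \<Longrightarrow> set vs \<subseteq> \<Delta> \<Longrightarrow> apply_cw f (2 ^ n) vs \<in> \<Delta>"
  unfolding Delta_eq by (auto intro: gen_sub.op)

lemma Delta_term_closed:
  "(k, t) \<in> term_ops F \<Longrightarrow> length vs = k \<Longrightarrow> set vs \<subseteq> \<Delta> \<Longrightarrow> apply_cw t (2 ^ n) vs \<in> \<Delta>"
  unfolding Delta_eq using gen_sub_term_closed generators_lists by blast

lemma Delta_q_closed: "x \<in> \<Delta> \<Longrightarrow> y \<in> \<Delta> \<Longrightarrow> z \<in> \<Delta> \<Longrightarrow> apply_cw q (2 ^ n) [x, y, z] \<in> \<Delta>"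
  using Delta_term_closed[OF q_term] by simp

lemma Delta_xor_invariant:
  assumes "v \<in> \<Delta>" "m < 2 ^ n"
  shows "map (\<lambda>l. v ! xor l m) [0..<2 ^ n] \<in> \<Delta>"
  using assms(1) unfolding Delta_eq
proof (induction rule: gen_sub.induct)
  case (gen v)
  then obtain i a b where v: "v = ctuple n i a b" "i < n" "(a, b) \<in> \<alpha> i"
    unfolding generators_def by auto
  have "map (\<lambda>l. v ! xor l m) [0..<2 ^ n] = (if bit m i then ctuple n i b a else ctuple n i a b)"
    using v(1) assms(2) by (auto simp: ctuple_def bit_xor_iff xor_less_power intro!: nth_equalityI)
  moreover have "ctuple n i b a \<in> generators" "ctuple n i a b \<in> generators"
    unfolding generators_def using v alpha_sym[OF v(2,3)] by blast+
  ultimately show ?case by (auto intro: gen_sub.gen)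
next
  case (op k f vs)
  have "map (\<lambda>l. apply_cw f (2 ^ n) vs ! xor l m) [0..<2 ^ n]
      = apply_cw f (2 ^ n) (map (\<lambda>v. map (\<lambda>l. v ! xor l m) [0..<2 ^ n]) vs)"
    using assms(2) by (auto simp: apply_cw_def xor_less_power comp_def intro!: nth_equalityI)
  moreover have "\<dots> \<in> gen_sub F (2 ^ n) generators"
    by (rule gen_sub.op) (use op in auto)
  ultimately show ?case by simp
qed

lemma fork_Delta_any_coordinate:
  assumes "j < 2 ^ n" "(x, y) \<in> fork N \<Delta>"
  shows "(x, y) \<in> fork j \<Delta>"
proof -
  obtain c d where cd: "c \<in> \<Delta>" "d \<in> \<Delta>" "N < 2 ^ n" "\<forall>l<2 ^ n. l \<noteq> N \<longrightarrow> c ! l = d ! l"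
    "c ! N = x" "d ! N = y"
    by (rule forkE[OF assms(2) Delta_length])
  define m where "m = xor j N"
  have m: "m < 2 ^ n" unfolding m_def using assms(1) by (intro xor_less_power) auto
  define c' where "c' = map (\<lambda>l. c ! xor l m) [0..<2 ^ n]"
  define d' where "d' = map (\<lambda>l. d ! xor l m) [0..<2 ^ n]"
  have "c' \<in> \<Delta>" "d' \<in> \<Delta>" unfolding c'_def d'_def using Delta_xor_invariant m cd by auto
  moreover have "c' ! l = d' ! l" if "l < 2 ^ n" "l \<noteq> j" for l
  proof -
    have "xor l m \<noteq> N" using xor_xor_eq_imp_eq that(2) unfolding m_def by blast
    then show ?thesis using cd(4) xor_less_power[OF that(1) m] that(1) by (simp add: c'_def d'_def)
  qed
  ultimately have "(c' ! j, d' ! j) \<in> fork j \<Delta>"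
    using forkI[of c' \<Delta> d' "2 ^ n" j] assms(1) by (simp add: c'_def d'_def)
  moreover have "c' ! j = x" "d' ! j = y" unfolding c'_def d'_def m_def
    using assms(1) cd(5,6) xor_xor_self[of j N] by simp_all
  ultimately show ?thesis by simp
qed

lemma fork_Delta_update:
  "x \<in> \<Delta> \<Longrightarrow> (x ! j, y) \<in> fork j \<Delta> \<Longrightarrow> x[j := y] \<in> \<Delta>"
  using fork_update[OF Delta_lists Delta_q_closed q_malcev] by blast

lemma Delta_by_coordinatewise_forks:
  assumes "e \<in> \<Delta>" "length w = 2 ^ n" "\<forall>k<2 ^ n. (e ! k, w ! k) \<in> fork N \<Delta>"
  shows "w \<in> \<Delta>"
proof -
  define u where "u j = map (\<lambda>k. if k < j then w ! k else e ! k) [0..<2 ^ n]" for j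
  have "u j \<in> \<Delta>" if "j \<le> 2 ^ n" for j
    using that
  proof (induction j)
    case 0
    have "u 0 = e" unfolding u_def using Delta_length assms(1) by (auto intro: nth_equalityI)
    then show ?case using assms(1) by simp
  next
    case (Suc j)
    then have j: "j < 2 ^ n" by simp
    have "u (Suc j) = (u j)[j := w ! j]"
      unfolding u_def using j by (auto simp: nth_list_update intro!: nth_equalityI)
    moreover have "(u j ! j, w ! j) \<in> fork j \<Delta>"
      using fork_Delta_any_coordinate[OF j] assms(3) j unfolding u_def by simp
    ultimately show ?case using fork_Delta_update Suc j by simp
  qed
  moreover have "u (2 ^ n) = w" unfolding u_def using assms(2) by (auto intro: nth_equalityI)
  ultimately show ?thesis by (metis order.refl)
qed

lemma fork_Delta_refl: "x \<in> A \<Longrightarrow> (x, x) \<in> fork N \<Delta>"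
proof -
  assume "x \<in> A"
  then have "ctuple n 0 x x \<in> generators"
    unfolding generators_def using n_pos alpha_refl[of 0 x] by (intro CollectI exI) auto
  then have "ctuple n 0 x x \<in> \<Delta>" unfolding Delta_eq by (rule gen_sub.gen)
  then have "(ctuple n 0 x x ! N, ctuple n 0 x x ! N) \<in> fork N \<Delta>"
    by (intro forkI[where m = "2 ^ n"]) (simp_all add: ctuple_def)
  then show ?thesis by (simp add: ctuple_nth)
qed

lemma fork_Delta_congruence: "congruence A F (fork N \<Delta>)"
proof -
  have sub: "fork N \<Delta> \<subseteq> A \<times> A"
  proof safe
    fix x y assume "(x, y) \<in> fork N \<Delta>"
    then show "x \<in> A" "y \<in> A"
      by (metis forkE[OF _ Delta_length] Delta_nth_in_carrier)+
  qed
  have "equiv A (fork N \<Delta>)"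
    using sub fork_Delta_refl fork_sym fork_trans[OF Delta_lists Delta_q_closed q_malcev]
    by (intro equivI refl_onI symI transI) auto
  moreover have "(f xs, f ys) \<in> fork N \<Delta>"
    if "(k, f) \<in> F" "length xs = k" "length ys = k" "list_all2 (\<lambda>x y. (x, y) \<in> fork N \<Delta>) xs ys"
    for k f xs ys
    using fork_compatible[of \<Delta> "2 ^ n" k f xs ys N] that Delta_length Delta_op_closed by simp
  ultimately show ?thesis unfolding congruence_def using sub by blast
qed

end

section \<open>Centrality\<close>

definition sel :: "(nat \<Rightarrow> 'a list) \<Rightarrow> (nat \<Rightarrow> 'a list) \<Rightarrow> (nat \<Rightarrow> bool) \<Rightarrow> nat \<Rightarrow> 'a list" where
  "sel a b \<sigma> i = (if \<sigma> i then b i else a i)"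

lemma cargs_eq_concat_sel:
  assumes "1 \<le> n" "\<forall>i<n - 1. (\<sigma> i \<longleftrightarrow> i \<in> S) \<and> b' i = b i" "sel a b' \<sigma> (n - 1) = c"
  shows "cargs n S a b c = concat (map (sel a b' \<sigma>) [0..<n])"
proof -
  have last: "concat (map (sel a b' \<sigma>) [0..<n]) = concat (map (sel a b' \<sigma>) [0..<n - 1]) @ c"
    using assms(1,3) by (cases n) auto
  have init: "map (\<lambda>i. if i \<in> S then b i else a i) [0..<n - 1] = map (sel a b' \<sigma>) [0..<n - 1]"
    by (rule map_cong) (use assms(2) in \<open>auto simp: sel_def\<close>)
  show ?thesis unfolding cargs_def init last ..
qed

lemma cargs_upd_last: "cargs n S (a(n - 1 := x)) (b(n - 1 := y)) c = cargs n S a b c"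
  unfolding cargs_def by (rule arg_cong[where f = "\<lambda>xs. concat xs @ c"], rule map_cong) auto

context malcev_congruences
begin

lemma alpha_list_refl: "i < n \<Longrightarrow> set xs \<subseteq> A \<Longrightarrow> list_all2 (\<lambda>x y. (x, y) \<in> \<alpha> i) xs xs"
  using alpha_refl by (auto simp: list_all2_conv_all_nth subset_iff)

definition cube :: "('a list \<Rightarrow> 'a) \<Rightarrow> (nat \<Rightarrow> 'a list) \<Rightarrow> (nat \<Rightarrow> 'a list) \<Rightarrow> 'a list" where
  "cube t a b = map (\<lambda>k. t (concat (map (sel a b (bit k)) [0..<n]))) [0..<2 ^ n]"

lemma cube_in_Delta:
  assumes blocks: "\<forall>i<n. list_all2 (\<lambda>x y. (x, y) \<in> \<alpha> i) (a i) (b i)"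
    and t: "((\<Sum>i<n. length (a i)), t) \<in> term_ops F"
  shows "cube t a b \<in> \<Delta>"
proof -
  define gs where
    "gs = concat (map (\<lambda>i. map (\<lambda>j. ctuple n i (a i ! j) (b i ! j)) [0..<length (a i)]) [0..<n])"
  have "set gs \<subseteq> generators"
    unfolding gs_def generators_def using blocks by (force simp: list_all2_conv_all_nth)
  then have "apply_cw t (2 ^ n) gs \<in> \<Delta>"
    using Delta_term_closed[OF t] unfolding Delta_eq
    by (simp add: gs_def length_concat_map_upt subset_iff gen_sub.gen)
  moreover have "map (\<lambda>g. g ! k) gs = concat (map (sel a b (bit k)) [0..<n])" if "k < 2 ^ n" for k
    unfolding gs_def map_concat
    using blocks that by (auto simp: comp_def sel_def ctuple_nth list_all2_conv_all_nth
        intro!: arg_cong[where f = concat] map_cong nth_equalityI)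
  moreover have "apply_cw t (2 ^ n) gs = cube t a b"
    unfolding apply_cw_def cube_def by (rule map_cong) (simp_all add: calculation(2))
  ultimately show ?thesis by simp
qed

lemma cube_nth:
  "k < 2 ^ n \<Longrightarrow> cube t a b ! k = t (concat (map (sel a b (bit k)) [0..<n]))"
  by (simp add: cube_def)

lemma cube_top:
  "cube t a b ! N = t (cargs n {..<n - 1} a b (b (n - 1)))"
proof -
  have "\<forall>i<n - 1. (bit N i \<longleftrightarrow> i \<in> {..<n - 1}) \<and> b i = b i"
    using bit_power_minus_1 by auto
  moreover have "sel a b (bit N) (n - 1) = b (n - 1)"
    using bit_power_minus_1[of n "n - 1"] n_pos by (simp add: sel_def)
  ultimately have "cargs n {..<n - 1} a b (b (n - 1)) = concat (map (sel a b (bit N)) [0..<n])"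
    by (rule cargs_eq_concat_sel[OF n_pos])
  then show ?thesis by (simp add: cube_nth)
qed

text \<open>Replacing the last block b by a changes only the vertices with top bit set, and those
  below the top vertex are pairs in the hypothesis of the centrality condition.\<close>

lemma cube_last_block_pairs:
  assumes blocks: "\<forall>i<n. list_all2 (\<lambda>x y. (x, y) \<in> \<alpha> i) (a i) (b i)"
    and t: "((\<Sum>i<n. length (a i)), t) \<in> term_ops F"
    and H: "\<forall>S. S \<subseteq> {..<n - 1} \<and> S \<noteq> {..<n - 1} \<longrightarrow>
             (t (cargs n S a b (a (n - 1))), t (cargs n S a b (b (n - 1)))) \<in> fork N \<Delta>"
    and k: "k < 2 ^ n" "k \<noteq> N"
  shows "(cube t a (b(n - 1 := a (n - 1))) ! k, cube t a b ! k) \<in> fork N \<Delta>"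
proof (cases "bit k (n - 1)")
  case False
  have eq: "map (sel a (b(n - 1 := a (n - 1))) (bit k)) [0..<n] = map (sel a b (bit k)) [0..<n]"
    by (rule map_cong) (use False in \<open>auto simp: sel_def\<close>)
  have "cube t a (b(n - 1 := a (n - 1))) ! k = cube t a b ! k"
    unfolding cube_nth[OF k(1)] eq ..
  then show ?thesis
    using fork_Delta_refl Delta_nth_in_carrier[OF cube_in_Delta[OF blocks t] k(1)] by simp
next
  case top: True
  define S where "S = {i. i < n - 1 \<and> bit k i}"
  have "S \<noteq> {..<n - 1}"
  proof
    assume S: "S = {..<n - 1}"
    have "bit k i \<longleftrightarrow> bit N i" if "i < n" for i
    proof -
      have "bit k i"
      proof (cases "i < n - 1")
        case True
        then have "i \<in> S" using S by simp
        then show ?thesis by (simp add: S_def)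
      next
        case False
        then have "i = n - 1" using that by linarith
        then show ?thesis using top by simp
      qed
      then show ?thesis using that bit_N by simp
    qed
    then have "k = N" using nat_eq_by_low_bits[OF k(1)] by simp
    then show False using k(2) by simp
  qed
  moreover have "S \<subseteq> {..<n - 1}" unfolding S_def by auto
  ultimately have "(t (cargs n S a b (a (n - 1))), t (cargs n S a b (b (n - 1)))) \<in> fork N \<Delta>"
    using H by blast
  moreover have "cargs n S a b (a (n - 1)) = concat (map (sel a (b(n - 1 := a (n - 1))) (bit k)) [0..<n])"
    "cargs n S a b (b (n - 1)) = concat (map (sel a b (bit k)) [0..<n])"
    by (rule cargs_eq_concat_sel[OF n_pos]; use top in \<open>simp add: S_def sel_def\<close>)+
  ultimately show ?thesis using k by (simp add: cube_nth)
qed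

lemma fork_Delta_centralizes: "centralizes A F n \<alpha> (fork N \<Delta>)"
  unfolding centralizes_def
proof (intro allI impI)
  fix a b :: "nat \<Rightarrow> 'a list" and t
  assume blk: "\<forall>i<n. length (a i) = length (b i) \<and> a i \<noteq> b i \<and> list_all2 (\<lambda>x y. (x, y) \<in> \<alpha> i) (a i) (b i)"
    and t: "((\<Sum>i<n. length (a i)), t) \<in> term_ops F"
    and H: "\<forall>S. S \<subseteq> {..<n - 1} \<and> S \<noteq> {..<n - 1} \<longrightarrow>
             (t (cargs n S a b (a (n - 1))), t (cargs n S a b (b (n - 1)))) \<in> fork N \<Delta>"
  let ?b' = "b(n - 1 := a (n - 1))"
  define E where "E = cube t a ?b'"
  define P where "P = cube t a b"
  have blocks: "\<forall>i<n. list_all2 (\<lambda>x y. (x, y) \<in> \<alpha> i) (a i) (b i)" using blk by blast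
  have "list_all2 (\<lambda>x y. (x, y) \<in> \<alpha> i) (a i) (?b' i)" if "i < n" for i
  proof (cases "i = n - 1")
    case True
    have "set (a i) \<subseteq> A"
      using blocks that alpha_in_carrier by (fastforce simp: list_all2_conv_all_nth set_conv_nth)
    then show ?thesis using alpha_list_refl[OF that] True by simp
  qed (use blocks that in simp)
  then have E: "E \<in> \<Delta>" unfolding E_def using t by (intro cube_in_Delta) auto
  have P: "P \<in> \<Delta>" unfolding P_def using cube_in_Delta[OF blocks t] .
  have lengths: "length E = 2 ^ n" "length P = 2 ^ n" by (simp_all add: E_def P_def cube_def)
  have "P[N := E ! N] \<in> \<Delta>"
  proof (rule Delta_by_coordinatewise_forks[OF E])
    show "\<forall>k<2 ^ n. (E ! k, P[N := E ! N] ! k) \<in> fork N \<Delta>"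
    proof (intro allI impI)
      fix k :: nat assume k: "k < 2 ^ n"
      show "(E ! k, P[N := E ! N] ! k) \<in> fork N \<Delta>"
      proof (cases "k = N")
        case True
        then show ?thesis using fork_Delta_refl Delta_nth_in_carrier[OF E k] lengths by simp
      next
        case False
        then show ?thesis using cube_last_block_pairs[OF blocks t H k] by (simp add: E_def P_def)
      qed
    qed
  qed (simp add: lengths)
  then have "(P[N := E ! N] ! N, P ! N) \<in> fork N \<Delta>"
    by (rule forkI[OF _ P, where m = "2 ^ n"]) (simp_all add: lengths)
  then have "(E ! N, P ! N) \<in> fork N \<Delta>" using lengths by simp
  moreover have "E ! N = t (cargs n {..<n - 1} a b (a (n - 1)))"
    using cube_top[of t a ?b'] cargs_upd_last[of n _ a "a (n - 1)"]
    unfolding E_def fun_upd_triv fun_upd_same by metis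
  ultimately show "(t (cargs n {..<n - 1} a b (a (n - 1))), t (cargs n {..<n - 1} a b (b (n - 1))))
      \<in> fork N \<Delta>"
    using cube_top lengths by (simp add: P_def)
qed

end

section \<open>Minimality\<close>

text \<open>Column of the list of generators c_{I j}(P j, Q j), j < L, at the vertex \<sigma> of the cube.\<close>

definition column :: "(nat \<Rightarrow> nat) \<Rightarrow> (nat \<Rightarrow> 'a) \<Rightarrow> (nat \<Rightarrow> 'a) \<Rightarrow> nat \<Rightarrow> (nat \<Rightarrow> bool) \<Rightarrow> 'a list" where
  "column I P Q L \<sigma> = map (\<lambda>j. if \<sigma> (I j) then Q j else P j) [0..<L]"

lemma length_column [simp]: "length (column I P Q L \<sigma>) = L"
  by (simp add: column_def)

lemma column_cong:
  "\<forall>j<L. I j < n \<Longrightarrow> \<forall>i<n. \<sigma> i = \<tau> i \<Longrightarrow> column I P Q L \<sigma> = column I P Q L \<tau>"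
  unfolding column_def by (rule map_cong) auto

definition unit_block :: "(nat \<Rightarrow> nat) \<Rightarrow> (nat \<Rightarrow> 'a) \<Rightarrow> (nat \<Rightarrow> 'a) \<Rightarrow> nat \<Rightarrow> nat \<Rightarrow> 'a list" where
  "unit_block I P Q L i = map (\<lambda>j. if I j = i then Q j else P j) [0..<L]"

definition gather :: "(nat \<Rightarrow> nat) \<Rightarrow> nat \<Rightarrow> 'a list \<Rightarrow> 'a list" where
  "gather I L xs = map (\<lambda>j. xs ! (I j * L + j)) [0..<L]"

text \<open>Argument j of a term is placed at position j of block I j; applied to blocks
  map P [0..<L] and unit_block, gather reads off the column.\<close>

lemma gather_concat_sel:
  assumes "\<forall>j<L. I j < n"
  shows "gather I L (concat (map (sel (\<lambda>_. map P [0..<L]) (unit_block I P Q L) \<sigma>) [0..<n]))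
    = column I P Q L \<sigma>"
proof -
  let ?blk = "sel (\<lambda>_. map P [0..<L]) (unit_block I P Q L) \<sigma>"
  have len: "length (?blk l) = L" for l by (simp add: sel_def unit_block_def)
  have "concat (map ?blk [0..<n]) ! (I j * L + j) = ?blk (I j) ! j" if "j < L" for j
    using nth_concat_map_upt[of "I j" n j ?blk] assms that by (simp add: len)
  then show ?thesis
    by (auto simp: gather_def column_def sel_def unit_block_def intro!: map_cong)
qed

lemma term_ops_gather:
  assumes "(L, u) \<in> term_ops F" "\<forall>j<L. I j < n"
  shows "(n * L, \<lambda>xs. u (gather I L xs)) \<in> term_ops F"
  unfolding gather_def
proof (rule term_ops_reindex[OF assms(1)], intro allI impI)
  fix j assume j: "j < L"
  have "I j * L + j < Suc (I j) * L" using j by simp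
  also have "\<dots> \<le> n * L" using assms(2) j by (intro mult_le_mono1) auto
  finally show "I j * L + j < n * L" .
qed

context malcev_congruences
begin

lemma generator_list_columns:
  assumes "set gs \<subseteq> generators"
  obtains I P Q where "\<forall>j<length gs. I j < n \<and> (P j, Q j) \<in> \<alpha> (I j)"
    "\<And>k. k < 2 ^ n \<Longrightarrow> map (\<lambda>g. g ! k) gs = column I P Q (length gs) (bit k)"
proof -
  have "\<forall>j<length gs. \<exists>i a b. gs ! j = ctuple n i a b \<and> i < n \<and> (a, b) \<in> \<alpha> i"
    using assms nth_mem unfolding generators_def by blast
  then obtain I P Q where "\<forall>j<length gs. gs ! j = ctuple n (I j) (P j) (Q j) \<and> I j < n
      \<and> (P j, Q j) \<in> \<alpha> (I j)"
    by metis
  then show thesis by (intro that) (auto simp: column_def ctuple_nth intro: nth_equalityI)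
qed

lemma Delta_pair_columns:
  assumes "c \<in> \<Delta>" "d \<in> \<Delta>"
  obtains L u w I P Q where "(L, u) \<in> term_ops F" "(L, w) \<in> term_ops F"
    "\<forall>j<L. I j < n \<and> (P j, Q j) \<in> \<alpha> (I j)"
    "\<And>k. k < 2 ^ n \<Longrightarrow> c ! k = u (column I P Q L (bit k))"
    "\<And>k. k < 2 ^ n \<Longrightarrow> d ! k = w (column I P Q L (bit k))"
proof -
  have lengths: "\<forall>g\<in>generators. length g = 2 ^ n" using generators_lists by blast
  obtain gs1 t1 where c: "set gs1 \<subseteq> generators" "(length gs1, t1) \<in> term_ops F"
    "c = apply_cw t1 (2 ^ n) gs1"
    using gen_sub_term_image[OF assms(1)[unfolded Delta_eq] lengths] by blast
  obtain gs2 t2 where d: "set gs2 \<subseteq> generators" "(length gs2, t2) \<in> term_ops F"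
    "d = apply_cw t2 (2 ^ n) gs2"
    using gen_sub_term_image[OF assms(2)[unfolded Delta_eq] lengths] by blast
  define L1 where "L1 = length gs1"
  define L where "L = length (gs1 @ gs2)"
  obtain I P Q where IPQ: "\<forall>j<L. I j < n \<and> (P j, Q j) \<in> \<alpha> (I j)"
    and cols: "\<And>k. k < 2 ^ n \<Longrightarrow> map (\<lambda>g. g ! k) (gs1 @ gs2) = column I P Q L (bit k)"
    using generator_list_columns[of "gs1 @ gs2"] c(1) d(1) unfolding L_def by auto
  define u where "u xs = t1 (map (\<lambda>i. xs ! i) [0..<L1])" for xs
  define w where "w xs = t2 (map (\<lambda>i. xs ! (L1 + i)) [0..<length gs2])" for xs
  have "(L, u) \<in> term_ops F" "(L, w) \<in> term_ops F"
    unfolding u_def w_def using c(2) d(2)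
    by (auto simp: L_def L1_def intro!: term_ops_reindex)
  moreover have "c ! k = u (column I P Q L (bit k))" "d ! k = w (column I P Q L (bit k))"
    if "k < 2 ^ n" for k
    using that c(3) d(3) unfolding cols[OF that, symmetric] u_def w_def
    by (auto simp: apply_cw_def L1_def nth_append intro!: arg_cong[where f = t1] arg_cong[where f = t2]
        nth_equalityI)
  ultimately show thesis using that IPQ by blast
qed

lemma column_in_carrier:
  "\<forall>j<L. I j < n \<and> (P j, Q j) \<in> \<alpha> (I j) \<Longrightarrow> set (column I P Q L \<sigma>) \<subseteq> A"
  using alpha_in_carrier by (auto simp: column_def)

lemma unit_block_related:
  assumes "\<forall>j<L. I j < n \<and> (P j, Q j) \<in> \<alpha> (I j)" "i < n"
  shows "list_all2 (\<lambda>x y. (x, y) \<in> \<alpha> i) (map P [0..<L]) (unit_block I P Q L i)"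
  using assms alpha_in_carrier alpha_refl by (auto simp: unit_block_def list_all2_conv_all_nth)

definition doubled :: "('a list \<Rightarrow> 'a) \<Rightarrow> ('a list \<Rightarrow> 'a) \<Rightarrow> nat \<Rightarrow> 'a list \<Rightarrow> 'a" where
  "doubled U W L xs = q [U (map (\<lambda>i. xs ! i) [0..<n * L]), W (map (\<lambda>i. xs ! i) [0..<n * L]),
     W (map (\<lambda>i. xs ! (if i < (n - 1) * L then i else i + L)) [0..<n * L])]"

lemma term_ops_doubled:
  assumes "(n * L, U) \<in> term_ops F" "(n * L, W) \<in> term_ops F"
  shows "(n * L + L, doubled U W L) \<in> term_ops F"
proof -
  have n: "(n - 1) * L + L = n * L" using n_pos by (cases n) auto
  define G where "G = [\<lambda>xs. U (map (\<lambda>i. xs ! i) [0..<n * L]), \<lambda>xs. W (map (\<lambda>i. xs ! i) [0..<n * L]),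
      \<lambda>xs. W (map (\<lambda>i. xs ! (if i < (n - 1) * L then i else i + L)) [0..<n * L])]"
  have "(n * L + L, G ! j) \<in> term_ops F" if "j < 3" for j
  proof -
    have "j = 0 \<or> j = 1 \<or> j = 2" using that by auto
    then show ?thesis unfolding G_def using assms n by (auto intro!: term_ops_reindex)
  qed
  from term_ops_subst[OF q_term, of "n * L + L" "\<lambda>j. G ! j"] this
  have "(n * L + L, \<lambda>xs. q (map (\<lambda>j. (G ! j) xs) [0..<3])) \<in> term_ops F" by blast
  moreover have "(\<lambda>xs. q (map (\<lambda>j. (G ! j) xs) [0..<3])) = doubled U W L"
    by (rule ext) (simp add: G_def doubled_def numeral_3_eq_3)
  ultimately show ?thesis by simp
qed

lemma doubled_cargs:
  assumes "\<forall>i<n - 1. length (a i) = L \<and> length (b i) = L" "length c1 = L" "length c2 = L"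
  shows "doubled U W L (cargs n S a b (c1 @ c2))
    = q [U (cargs n S a b c1), W (cargs n S a b c1), W (cargs n S a b c2)]"
proof -
  define ys where "ys = concat (map (\<lambda>i. if i \<in> S then b i else a i) [0..<n - 1])"
  have cargs: "cargs n S a b c = ys @ c" for c unfolding cargs_def ys_def by simp
  have "length ys = (\<Sum>l<n - 1. L)"
    unfolding ys_def length_concat_map_upt by (rule sum.cong) (use assms(1) in auto)
  then have ys: "length ys = (n - 1) * L" by simp
  have n: "(n - 1) * L + L = n * L" using n_pos by (cases n) auto
  have "map (\<lambda>i. (ys @ c1 @ c2) ! i) [0..<n * L] = ys @ c1"
    "map (\<lambda>i. (ys @ c1 @ c2) ! (if i < (n - 1) * L then i else i + L)) [0..<n * L] = ys @ c2"
    using ys n assms(2,3) by (auto simp: nth_append intro!: nth_equalityI arg_cong[where f = "(!) c2"])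
  then show ?thesis unfolding doubled_def cargs by simp
qed

text \<open>Nondegeneracy (every block contains a generator with distinct entries) is what makes
  the tuples a_i, b_i below distinct, as the centrality condition requires.\<close>

lemma centralizing_congruence_top_pair_nondegenerate:
  assumes \<gamma>: "congruence A F \<gamma>" "centralizes A F n \<alpha> \<gamma>"
    and u: "(L, u) \<in> term_ops F" and w: "(L, w) \<in> term_ops F"
    and IPQ: "\<forall>j<L. I j < n \<and> (P j, Q j) \<in> \<alpha> (I j)"
    and agree: "\<And>\<sigma> i. i < n \<Longrightarrow> \<not> \<sigma> i \<Longrightarrow> u (column I P Q L \<sigma>) = w (column I P Q L \<sigma>)"
    and nondegenerate: "\<forall>i<n. \<exists>j<L. I j = i \<and> P j \<noteq> Q j"
  shows "(w (column I P Q L (\<lambda>_. True)), u (column I P Q L (\<lambda>_. True))) \<in> \<gamma>"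
proof -
  let ?v = "column I P Q L"
  define a :: "nat \<Rightarrow> 'a list" where "a = (\<lambda>_. map P [0..<L])"
  define b where "b = unit_block I P Q L"
  define a' where "a' = a(n - 1 := a (n - 1) @ b (n - 1))"
  define b' where "b' = b(n - 1 := b (n - 1) @ b (n - 1))"
  define t where "t = doubled (\<lambda>xs. u (gather I L xs)) (\<lambda>xs. w (gather I L xs)) L"
  define sg where "sg S v i = (if i = n - 1 then v else i \<in> S)" for S and v :: bool and i
  have IL: "\<forall>j<L. I j < n" using IPQ by blast
  have in_A: "u (?v \<sigma>) \<in> A" "w (?v \<sigma>) \<in> A" for \<sigma>
    by (rule term_ops_closed[OF algebra u] term_ops_closed[OF algebra w];
        simp add: column_in_carrier[OF IPQ])+
  have ab_length: "length (a i) = L" "length (b i) = L" for i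
    by (simp_all add: a_def b_def unit_block_def)
  have "(\<Sum>i<n. length (a' i)) = n * L + L"
  proof -
    obtain m where m: "n = Suc m" using n_pos by (cases n) auto
    have "(\<Sum>i<m. length (a' i)) = (\<Sum>i<m. L)"
      by (rule sum.cong) (simp_all add: a'_def m ab_length)
    then show ?thesis by (simp add: m a'_def ab_length)
  qed
  then have t_term: "((\<Sum>i<n. length (a' i)), t) \<in> term_ops F"
    unfolding t_def using term_ops_doubled term_ops_gather[OF u IL] term_ops_gather[OF w IL] by simp
  have blocks: "length (a' i) = length (b' i) \<and> a' i \<noteq> b' i
      \<and> list_all2 (\<lambda>x y. (x, y) \<in> \<alpha> i) (a' i) (b' i)" if i: "i < n" for i
  proof -
    have related: "list_all2 (\<lambda>x y. (x, y) \<in> \<alpha> i) (a i) (b i)"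
      unfolding a_def b_def by (rule unit_block_related[OF IPQ i])
    have "set (b i) \<subseteq> A"
      using IPQ alpha_in_carrier by (fastforce simp: b_def unit_block_def)
    then have "list_all2 (\<lambda>x y. (x, y) \<in> \<alpha> i) (b i) (b i)" by (rule alpha_list_refl[OF i])
    moreover obtain j where "j < L" "I j = i" "P j \<noteq> Q j" using nondegenerate i by blast
    then have "a i ! j \<noteq> b i ! j" by (simp add: a_def b_def unit_block_def)
    then have "a i \<noteq> b i" by auto
    ultimately show ?thesis
      using related ab_length by (auto simp: a'_def b'_def list_all2_appendI)
  qed
  have cargs_vertex: "cargs n S a b (a (n - 1)) = concat (map (sel a b (sg S False)) [0..<n])"
    "cargs n S a b (b (n - 1)) = concat (map (sel a b (sg S True)) [0..<n])" for S
    by (rule cargs_eq_concat_sel[OF n_pos]; simp add: sel_def sg_def)+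
  have gathered: "gather I L (concat (map (sel a b \<sigma>) [0..<n])) = ?v \<sigma>" for \<sigma>
    unfolding a_def b_def by (rule gather_concat_sel[OF IL])
  have t_cargs: "t (cargs n S a' b' (c1 @ c2))
      = q [u (gather I L (cargs n S a b c1)), w (gather I L (cargs n S a b c1)),
           w (gather I L (cargs n S a b c2))]"
    if "length c1 = L" "length c2 = L" for S c1 c2
    unfolding t_def a'_def b'_def cargs_upd_last using that ab_length by (intro doubled_cargs) auto
  have top_values:
    "t (cargs n S a' b' (a' (n - 1))) = q [u (?v (sg S False)), w (?v (sg S False)), w (?v (sg S True))]"
    "t (cargs n S a' b' (b' (n - 1))) = q [u (?v (sg S True)), w (?v (sg S True)), w (?v (sg S True))]"
    for S
    using t_cargs[OF ab_length(1,2)] t_cargs[OF ab_length(2,2)]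
    unfolding a'_def b'_def fun_upd_same
    by (simp_all only: cargs_vertex gathered)
  have "(t (cargs n S a' b' (a' (n - 1))), t (cargs n S a' b' (b' (n - 1)))) \<in> \<gamma>"
    if "S \<subseteq> {..<n - 1}" "S \<noteq> {..<n - 1}" for S
  proof -
    have "\<not> {..<n - 1} \<subseteq> S" using that by blast
    then obtain i where "i < n - 1" "i \<notin> S" by auto
    then have "u (?v (sg S v)) = w (?v (sg S v))" for v by (intro agree[of i]) (auto simp: sg_def)
    then have "t (cargs n S a' b' (a' (n - 1))) = w (?v (sg S True))"
      "t (cargs n S a' b' (b' (n - 1))) = w (?v (sg S True))"
      using top_values q_malcev in_A by simp_all
    then show ?thesis using congruence_refl[OF \<gamma>(1)] in_A by simp
  qed
  then have "(t (cargs n {..<n - 1} a' b' (a' (n - 1))), t (cargs n {..<n - 1} a' b' (b' (n - 1)))) \<in> \<gamma>"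
    using blocks by (intro \<gamma>(2)[unfolded centralizes_def, rule_format, OF _ t_term]) auto
  moreover have "t (cargs n {..<n - 1} a' b' (a' (n - 1))) = w (?v (\<lambda>_. True))"
    "t (cargs n {..<n - 1} a' b' (b' (n - 1))) = u (?v (\<lambda>_. True))"
  proof -
    have "?v (sg {..<n - 1} True) = ?v (\<lambda>_. True)"
      using IL by (intro column_cong) (auto simp: sg_def)
    moreover have "u (?v (sg {..<n - 1} False)) = w (?v (sg {..<n - 1} False))"
      using n_pos by (intro agree[of "n - 1"]) (auto simp: sg_def)
    ultimately show "t (cargs n {..<n - 1} a' b' (a' (n - 1))) = w (?v (\<lambda>_. True))"
      "t (cargs n {..<n - 1} a' b' (b' (n - 1))) = u (?v (\<lambda>_. True))"
      using top_values[of "{..<n - 1}"] q_malcev in_A by simp_all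
  qed
  ultimately show ?thesis by simp
qed

lemma centralizing_congruence_top_pair:
  assumes \<gamma>: "congruence A F \<gamma>" "centralizes A F n \<alpha> \<gamma>"
    and u: "(L, u) \<in> term_ops F" and w: "(L, w) \<in> term_ops F"
    and IPQ: "\<forall>j<L. I j < n \<and> (P j, Q j) \<in> \<alpha> (I j)"
    and agree: "\<And>\<sigma> i. i < n \<Longrightarrow> \<not> \<sigma> i \<Longrightarrow> u (column I P Q L \<sigma>) = w (column I P Q L \<sigma>)"
  shows "(u (column I P Q L (\<lambda>_. True)), w (column I P Q L (\<lambda>_. True))) \<in> \<gamma>"
proof (cases "\<forall>i<n. \<exists>j<L. I j = i \<and> P j \<noteq> Q j")
  case True
  from centralizing_congruence_top_pair_nondegenerate[OF assms True] show ?thesis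
    by (rule congruence_sym[OF \<gamma>(1)])
next
  case False
  then obtain i where i: "i < n" "\<forall>j<L. I j = i \<longrightarrow> P j = Q j" by blast
  then have "column I P Q L (\<lambda>_. True) = column I P Q L (\<lambda>l. l \<noteq> i)"
    by (auto simp: column_def)
  moreover have "u (column I P Q L (\<lambda>l. l \<noteq> i)) \<in> A"
    by (rule term_ops_closed[OF algebra u]) (simp_all add: column_in_carrier[OF IPQ])
  ultimately show ?thesis
    using agree[OF i(1), of "\<lambda>l. l \<noteq> i"] congruence_refl[OF \<gamma>(1)] by simp
qed

lemma fork_Delta_le_centralizing_congruence:
  assumes "congruence A F \<gamma>" "centralizes A F n \<alpha> \<gamma>"
  shows "fork N \<Delta> \<subseteq> \<gamma>"
proof (rule subrelI)
  fix x y assume "(x, y) \<in> fork N \<Delta>"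
  then obtain c d where cd: "c \<in> \<Delta>" "d \<in> \<Delta>" "N < 2 ^ n" "\<forall>l<2 ^ n. l \<noteq> N \<longrightarrow> c ! l = d ! l"
    "c ! N = x" "d ! N = y"
    by (rule forkE[OF _ Delta_length])
  obtain L I P Q u w where uw: "(L, u) \<in> term_ops F" "(L, w) \<in> term_ops F"
    and IPQ: "\<forall>j<L. I j < n \<and> (P j, Q j) \<in> \<alpha> (I j)"
    and c: "\<And>k. k < 2 ^ n \<Longrightarrow> c ! k = u (column I P Q L (bit k))"
    and d: "\<And>k. k < 2 ^ n \<Longrightarrow> d ! k = w (column I P Q L (bit k))"
    by (rule Delta_pair_columns[OF cd(1,2)]) blast
  have IL: "\<forall>j<L. I j < n" using IPQ by blast
  have "u (column I P Q L \<sigma>) = w (column I P Q L \<sigma>)" if "i < n" "\<not> \<sigma> i" for \<sigma> i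
  proof -
    define k where "k = nat_of_bits n \<sigma>"
    have k: "k < 2 ^ n" "k \<noteq> N"
      using that bit_nat_of_bits[of n \<sigma> i] bit_N[of i] nat_of_bits_less unfolding k_def by auto
    have vertex: "column I P Q L (bit k) = column I P Q L \<sigma>"
      using IL by (intro column_cong) (auto simp: k_def bit_nat_of_bits)
    show ?thesis using c[OF k(1)] d[OF k(1)] cd(4) k unfolding vertex by simp
  qed
  from centralizing_congruence_top_pair[OF assms uw IPQ this]
  moreover have "column I P Q L (bit N) = column I P Q L (\<lambda>_. True)"
    using IL bit_N by (intro column_cong) auto
  ultimately show "(x, y) \<in> \<gamma>" using cd(3,5,6) c d by simp
qed

end

theorem mainTheorem1:
  fixes A :: "'a set" and F :: "'a operation set" and n :: nat
    and \<alpha> :: "nat \<Rightarrow> ('a \<times> 'a) set"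
  assumes "algebra A F"
    and "malcev A F"
    and "n \<ge> 1"
    and "\<forall>i<n. congruence A F (\<alpha> i)"
  shows "commutator A F n \<alpha> = fork (2 ^ n - 1) (Delta A F n \<alpha>)"
proof -
  obtain q where "(3, q) \<in> term_ops F" "\<forall>x\<in>A. \<forall>y\<in>A. q [x, x, y] = y \<and> q [y, x, x] = y"
    using assms(2) unfolding malcev_def by blast
  then interpret malcev_congruences A F q n \<alpha>
    using assms by unfold_locales
  show ?thesis
  proof
    show "commutator A F n \<alpha> \<subseteq> fork N \<Delta>"
      unfolding commutator_def using fork_Delta_congruence fork_Delta_centralizes by blast
    show "fork N \<Delta> \<subseteq> commutator A F n \<alpha>"
      unfolding commutator_def using fork_Delta_le_centralizing_congruence by blast
  qed
qed

end
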